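(* For $z\in\mathbb{C}$ with $\mathrm{Re}(z)>-1$, $$\zeta_E(z)=\frac12+\frac12\, z\int_1^\infty\frac{\overline E_0(-t)}{t^{z+1}}\,dt .$$ In particular, $$\tilde\gamma_0=\frac12+\frac12\sum_{j=1}^\infty(-1)^{j+1}\frac{1}{j(j+1)}=\frac12\left(\psi(2)-\psi\left(\tfrac32\right)+1\right),$$ where $\psi=\Gamma'/\Gamma$ is the digamma function.
   Context: For $q>0$, $\zeta_E(z,q)=\sum_{n=0}^\infty (-1)^n (n+q)^{-z}$ for $\mathrm{Re}(z)>0$, extended by analytic continuation to an entire function of $z$; $\zeta_E(z)=\zeta_E(z,1)=\sum_{n\ge1}(-1)^{n+1}n^{-z}$. The modified Stieltjes constants $\tilde\gamma_k(q)$ are defined by the Taylor expansion $\zeta_E(z,q)=\sum_{k=0}^\infty\frac{(-1)^k\tilde\gamma_k(q)}{k!}(z-1)^k$, and $\tilde\gamma_k:=\tilde\gamma_k(1)$ (so $\tilde\gamma_0=\zeta_E(1)$). $\overline E_0$ is the quasi-periodic Euler function: $\overline E_0(t)=1$ for $0\le t<1$ and $\overline E_0(t+1)=-\overline E_0(t)$ for all real $t$. *)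

theory Defs
  imports "HOL-Complex_Analysis.Complex_Analysis"
begin

definition zetaE_h :: "real \<Rightarrow> complex \<Rightarrow> complex" where
  "zetaE_h q = (THE f. f holomorphic_on UNIV \<and>
     (\<forall>z. Re z > 0 \<longrightarrow>
        (\<lambda>n. (-1) ^ n / (complex_of_real (real n + q)) powr z) sums f z))"

definition zetaE :: "complex \<Rightarrow> complex" where
  "zetaE = zetaE_h 1"

text \<open>Modified Stieltjes constants: zetaE(z,q) = sum_k (-1)^k gt_k(q)/k! (z-1)^k.\<close>
definition tilde_gamma :: "nat \<Rightarrow> real \<Rightarrow> complex" where
  "tilde_gamma k q = (-1) ^ k * (deriv ^^ k) (zetaE_h q) 1"

text \<open>Quasi-periodic Euler function: 1 on [0,1), E(t+1) = -E(t); equals (-1)^floor t.\<close>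
definition E0bar :: "real \<Rightarrow> real" where
  "E0bar t = (if even \<lfloor>t\<rfloor> then 1 else -1)"

end

theory Submission
  imports Defs
begin

(* Let f w = w powr -z and let fdiff be the backward difference, (fdiff f) w = f w - f (w + 1).
   Summation by parts turns the alternating series of fdiff^k f (n + 1) into
   (fdiff^k f 1 + alternating series of fdiff^(k+1) f (n + 1)) / 2.  By the mean value inequality
   fdiff^k f (n + 1) = O(n powr (-Re z - k)), so the k-th series converges for Re z + k > 0, and
   locally uniformly in z for Re z + k > 1, where its sum is therefore holomorphic.  Iterating
   this Euler transform continues the alternating zeta series to an entire function, which is
   zetaE by uniqueness of analytic continuation, and a single step gives
   zetaE z = 1/2 + (alternating series of fdiff f (n + 1)) / 2 for Re z > -1.
   On (n + 1, n + 2] the function E0bar (-t) is (-1)^n, and t powr (-z - 1) integrates over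
   [n + 1, n + 2] to fdiff f (n + 1) / z, so the improper integral is that series divided by z.
   Finally zetaE 1 = ln 2, to which both closed forms of tilde_gamma 0 reduce. *)

fun fdiff :: "nat \<Rightarrow> ('a::{plus,one} \<Rightarrow> 'b::minus) \<Rightarrow> 'a \<Rightarrow> 'b" where
  "fdiff 0 f w = f w"
| "fdiff (Suc k) f w = fdiff k f w - fdiff k f (w + 1)"

lemma has_field_derivative_fdiff:
  fixes f f' :: "complex \<Rightarrow> complex"
  assumes "\<And>w. Re w > 0 \<Longrightarrow> (f has_field_derivative f' w) (at w)" and "Re w > 0"
  shows "(fdiff k f has_field_derivative fdiff k f' w) (at w)"
  using assms(2)
proof (induction k arbitrary: w)
  case 0
  then show ?case using assms(1) by simp
next
  case (Suc k)
  have "((\<lambda>w. fdiff k f (w + 1)) has_field_derivative fdiff k f' (w + 1)) (at w)"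
    using DERIV_chain2[OF Suc.IH[of "w + 1"] DERIV_add[OF DERIV_ident DERIV_const]] Suc.prems
    by simp
  moreover have "fdiff (Suc k) f = (\<lambda>w. fdiff k f w - fdiff k f (w + 1))"
    by auto
  ultimately show ?case
    using Suc by (auto intro!: derivative_eq_intros)
qed

lemma norm_fdiff_le:
  fixes F :: "nat \<Rightarrow> complex \<Rightarrow> complex"
  assumes "\<And>j w. Re w > 0 \<Longrightarrow> (F j has_field_derivative F (Suc j) w) (at w)"
    and "x > 0" and "\<And>y. x \<le> y \<Longrightarrow> y \<le> x + real k \<Longrightarrow> norm (F k (of_real y)) \<le> B"
  shows "norm (fdiff k (F 0) (of_real x)) \<le> B"
  using assms
proof (induction k arbitrary: F x)
  case 0
  then show ?case by simp
next
  case (Suc k)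
  define S where "S = closed_segment (complex_of_real x) (of_real (x + 1))"
  have S: "\<exists>y. z = of_real y \<and> x \<le> y \<and> y \<le> x + 1" if "z \<in> S" for z
    using that unfolding S_def closed_segment_of_real closed_segment_eq_real_ivl by auto
  have "norm (fdiff k (F 0) (of_real x) - fdiff k (F 0) (of_real (x + 1)))
      \<le> B * norm (of_real x - (of_real (x + 1) :: complex))"
  proof (rule field_differentiable_bound[where S = S])
    fix z assume "z \<in> S"
    then obtain y where y: "z = of_real y" "x \<le> y" "y \<le> x + 1"
      using S by blast
    have "(fdiff k (F 0) has_field_derivative fdiff k (F 1) z) (at z)"
      using y Suc.prems(1,2) by (intro has_field_derivative_fdiff) auto
    then show "(fdiff k (F 0) has_field_derivative fdiff k (F 1) z) (at z within S)"
      by (rule has_field_derivative_at_within)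
    have "norm (fdiff k ((\<lambda>j. F (Suc j)) 0) (of_real y)) \<le> B"
      using Suc.prems y by (intro Suc.IH) auto
    then show "norm (fdiff k (F 1) z) \<le> B"
      using y by simp
  qed (auto simp: S_def)
  then show ?case by simp
qed

definition powr_deriv :: "complex \<Rightarrow> nat \<Rightarrow> complex \<Rightarrow> complex" where
  "powr_deriv a j w = (\<Prod>i<j. a - of_nat i) * w powr (a - of_nat j)"

lemma powr_deriv_0: "powr_deriv a 0 = (\<lambda>w. w powr a)"
  by (simp add: powr_deriv_def fun_eq_iff)

lemma has_field_derivative_powr_deriv:
  assumes "w \<notin> \<real>\<^sub>\<le>\<^sub>0"
  shows "(powr_deriv a j has_field_derivative powr_deriv a (Suc j) w) (at w)"
proof -
  have "((\<lambda>w. (\<Prod>i<j. a - of_nat i) * w powr (a - of_nat j)) has_field_derivative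
      (\<Prod>i<j. a - of_nat i) * ((a - of_nat j) * w powr (a - of_nat j - 1))) (at w)"
    using assms by (intro DERIV_cmult has_field_derivative_powr)
  then show ?thesis
    unfolding powr_deriv_def[abs_def] by (simp add: mult.assoc diff_diff_add add.commute)
qed

lemma norm_fdiff_powr_le:
  assumes "\<sigma> \<le> Re z" "norm z \<le> R" "\<sigma> + real k \<ge> 0" "x \<ge> 1"
  shows "norm (fdiff k (\<lambda>w. w powr (-z)) (of_real x)) \<le> (\<Prod>i<k. R + real i) * x powr (-\<sigma> - real k)"
proof -
  have "norm (fdiff k (powr_deriv (-z) 0) (of_real x)) \<le> (\<Prod>i<k. R + real i) * x powr (-\<sigma> - real k)"
  proof (rule norm_fdiff_le)
    fix j and w :: complex assume "Re w > 0"
    then show "(powr_deriv (-z) j has_field_derivative powr_deriv (-z) (Suc j) w) (at w)"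
      by (intro has_field_derivative_powr_deriv) (auto simp: nonpos_Reals_def)
  next
    fix y assume y: "x \<le> y" "y \<le> x + real k"
    have "norm (powr_deriv (-z) k (of_real y)) = (\<Prod>i<k. norm (-z - of_nat i)) * y powr (-Re z - real k)"
      using y assms(4) by (simp add: powr_deriv_def norm_mult prod_norm norm_powr_real_powr)
    also have "\<dots> \<le> (\<Prod>i<k. R + real i) * x powr (-\<sigma> - real k)"
    proof (rule mult_mono)
      show "(\<Prod>i<k. norm (-z - of_nat i)) \<le> (\<Prod>i<k. R + real i)"
      proof (intro prod_mono conjI)
        fix i
        have "norm (-z - of_nat i) \<le> norm z + real i"
          using norm_triangle_ineq4[of "-z" "of_nat i"] by simp
        then show "norm (-z - of_nat i) \<le> R + real i"
          using assms(2) by simp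
      qed simp
      have "y powr (-Re z - real k) \<le> x powr (-Re z - real k)"
        using assms y by (intro powr_mono2') auto
      also have "\<dots> \<le> x powr (-\<sigma> - real k)"
        using assms by (intro powr_mono) auto
      finally show "y powr (-Re z - real k) \<le> x powr (-\<sigma> - real k)" .
    qed (auto intro!: prod_nonneg add_nonneg_nonneg order_trans[OF norm_ge_zero assms(2)])
    finally show "norm (powr_deriv (-z) k (of_real y)) \<le> (\<Prod>i<k. R + real i) * x powr (-\<sigma> - real k)" .
  qed (use assms in auto)
  then show ?thesis by (simp add: powr_deriv_0)
qed

lemma summable_real_plus_1_powr: "s < -1 \<Longrightarrow> summable (\<lambda>n. (real n + 1) powr s)"
  using summable_Suc_iff[of "\<lambda>n. real n powr s"] summable_real_powr_iff[of s]
  by (simp add: add.commute)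

lemma summable_norm_fdiff_powr:
  assumes "Re z + real k > 1"
  shows "summable (\<lambda>n. norm (fdiff k (\<lambda>w. w powr (-z)) (of_real (real n + 1))))"
proof (rule summable_comparison_test)
  have "norm (fdiff k (\<lambda>w. w powr (-z)) (of_real (real n + 1)))
      \<le> (\<Prod>i<k. norm z + real i) * (real n + 1) powr (-Re z - real k)" for n
    using assms by (intro norm_fdiff_powr_le) auto
  then show "\<exists>N. \<forall>n\<ge>N. norm (norm (fdiff k (\<lambda>w. w powr (-z)) (of_real (real n + 1))))
      \<le> (\<Prod>i<k. norm z + real i) * (real n + 1) powr (-Re z - real k)"
    by auto
  show "summable (\<lambda>n. (\<Prod>i<k. norm z + real i) * (real n + 1) powr (-Re z - real k))"
    using assms by (intro summable_mult summable_real_plus_1_powr) auto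
qed

lemma fdiff_powr_tendsto_0:
  assumes "Re z + real k > 0"
  shows "(\<lambda>n. fdiff k (\<lambda>w. w powr (-z)) (of_real (real n + 1))) \<longlonglongrightarrow> 0"
proof (rule Lim_null_comparison)
  have "norm (fdiff k (\<lambda>w. w powr (-z)) (of_real (real n + 1)))
      \<le> (\<Prod>i<k. norm z + real i) * (real n + 1) powr (-Re z - real k)" for n
    using assms by (intro norm_fdiff_powr_le) auto
  then show "\<forall>\<^sub>F n in sequentially. norm (fdiff k (\<lambda>w. w powr (-z)) (of_real (real n + 1)))
      \<le> (\<Prod>i<k. norm z + real i) * (real n + 1) powr (-Re z - real k)"
    by simp
  have "filterlim (\<lambda>n. real n + 1) at_top sequentially"
    using filterlim_tendsto_add_at_top[OF tendsto_const[of 1] filterlim_real_sequentially]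
    by (simp add: add.commute)
  then have "(\<lambda>n. (real n + 1) powr (-Re z - real k)) \<longlonglongrightarrow> 0"
    using assms by (intro tendsto_neg_powr) auto
  then show "(\<lambda>n. (\<Prod>i<k. norm z + real i) * (real n + 1) powr (-Re z - real k)) \<longlonglongrightarrow> 0"
    by (rule tendsto_mult_right_zero)
qed

lemma holomorphic_fdiff_powr: "(\<lambda>z. fdiff k (\<lambda>w. w powr (-z)) w) holomorphic_on UNIV"
  by (induction k arbitrary: w) (auto intro!: holomorphic_intros)

lemma alternating_sums_from_differences:
  fixes b :: "nat \<Rightarrow> 'a::real_normed_field"
  assumes "b \<longlonglongrightarrow> 0" and "(\<lambda>n. (-1)^n * (b n - b (Suc n))) sums T"
  shows "(\<lambda>n. (-1)^n * b n) sums ((T + b 0) / 2)"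
proof -
  have "(\<Sum>n<N. (-1)^n * (b n - b (Suc n))) = 2 * (\<Sum>n<N. (-1)^n * b n) + (-1)^N * b N - b 0" for N
    by (induction N) (auto simp: algebra_simps)
  then have partial_sums: "(\<Sum>n<N. (-1)^n * b n)
      = ((\<Sum>n<N. (-1)^n * (b n - b (Suc n))) + b 0 - (-1)^N * b N) / 2" for N
    by simp
  have "(\<lambda>N. norm ((-1)^N * b N)) \<longlonglongrightarrow> 0"
    using tendsto_norm_zero[OF assms(1)] by (simp add: norm_mult norm_power)
  then have "(\<lambda>N. (-1)^N * b N) \<longlonglongrightarrow> 0"
    by (rule tendsto_norm_zero_cancel)
  then have "(\<lambda>N. ((\<Sum>n<N. (-1)^n * (b n - b (Suc n))) + b 0 - (-1)^N * b N) / 2)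
      \<longlonglongrightarrow> (T + b 0 - 0) / 2"
    using assms(2) unfolding sums_def by (intro tendsto_intros) simp_all
  then show ?thesis
    unfolding sums_def partial_sums by simp
qed

definition eta_tail :: "nat \<Rightarrow> complex \<Rightarrow> complex" where
  "eta_tail k z = (\<Sum>n. (-1)^n * fdiff k (\<lambda>w. w powr (-z)) (of_real (real n + 1)))"

lemma eta_tail_sums_halved:
  assumes "Re z + real k > 0"
  shows "(\<lambda>n. (-1)^n * fdiff k (\<lambda>w. w powr (-z)) (of_real (real n + 1)))
    sums ((eta_tail (Suc k) z + fdiff k (\<lambda>w. w powr (-z)) 1) / 2)"
proof -
  let ?b = "\<lambda>n. fdiff k (\<lambda>w. w powr (-z)) (of_real (real n + 1))"
  have "summable (\<lambda>n. norm ((-1)^n * fdiff (Suc k) (\<lambda>w. w powr (-z)) (of_real (real n + 1))))"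
    using assms summable_norm_fdiff_powr[of z "Suc k"] by (simp add: norm_mult norm_power)
  then have "(\<lambda>n. (-1)^n * fdiff (Suc k) (\<lambda>w. w powr (-z)) (of_real (real n + 1))) sums eta_tail (Suc k) z"
    unfolding eta_tail_def by (rule summable_sums[OF summable_norm_cancel])
  then have "(\<lambda>n. (-1)^n * (?b n - ?b (Suc n))) sums eta_tail (Suc k) z"
    by (simp add: add_ac)
  from alternating_sums_from_differences[OF fdiff_powr_tendsto_0[OF assms] this]
  show ?thesis by simp
qed

lemma eta_tail_sums:
  assumes "Re z + real k > 0"
  shows "(\<lambda>n. (-1)^n * fdiff k (\<lambda>w. w powr (-z)) (of_real (real n + 1))) sums eta_tail k z"
  using sums_summable[OF eta_tail_sums_halved[OF assms]] unfolding eta_tail_def by (rule summable_sums)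

lemma eta_tail_Suc:
  "Re z + real k > 0 \<Longrightarrow> eta_tail k z = (eta_tail (Suc k) z + fdiff k (\<lambda>w. w powr (-z)) 1) / 2"
  using eta_tail_sums_halved eta_tail_sums sums_unique2 by blast

lemma eta_tail_holomorphic: "eta_tail k holomorphic_on {z. Re z > 1 - real k}"
  unfolding eta_tail_def[abs_def]
proof (rule holomorphic_uniform_sequence)
  fix z0 assume "z0 \<in> {z. Re z > 1 - real k}"
  define d where "d = (Re z0 + real k - 1) / 2"
  have "d > 0" and shift: "Re z0 - d + real k = 1 + d"
    using \<open>z0 \<in> _\<close> by (simp_all add: d_def field_simps)
  have z_near: "Re z0 - d \<le> Re z" "norm z \<le> norm z0 + d" if "z \<in> cball z0 d" for z
    using that abs_Re_le_cmod[of "z - z0"] norm_triangle_ineq2[of z z0]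
    by (auto simp: dist_norm norm_minus_commute)
  have "cball z0 d \<subseteq> {z. Re z > 1 - real k}"
    using z_near(1) shift \<open>d > 0\<close> by fastforce
  moreover have "uniform_limit (cball z0 d)
      (\<lambda>N z. \<Sum>n<N. (-1)^n * fdiff k (\<lambda>w. w powr (-z)) (of_real (real n + 1)))
      (\<lambda>z. \<Sum>n. (-1)^n * fdiff k (\<lambda>w. w powr (-z)) (of_real (real n + 1))) sequentially"
  proof (rule Weierstrass_m_test)
    show "summable (\<lambda>n. (\<Prod>i<k. norm z0 + d + real i) * (real n + 1) powr (-1 - d))"
      using \<open>d > 0\<close> by (intro summable_mult summable_real_plus_1_powr) auto
    fix n z assume "z \<in> cball z0 d"
    with z_near have "Re z0 - d \<le> Re z" "norm z \<le> norm z0 + d"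
      by auto
    then have "norm (fdiff k (\<lambda>w. w powr (-z)) (of_real (real n + 1)))
        \<le> (\<Prod>i<k. norm z0 + d + real i) * (real n + 1) powr (-(Re z0 - d) - real k)"
      using shift \<open>d > 0\<close> by (intro norm_fdiff_powr_le) auto
    also have "-(Re z0 - d) - real k = -1 - d"
      using shift by simp
    finally show "norm ((-1)^n * fdiff k (\<lambda>w. w powr (-z)) (of_real (real n + 1)))
        \<le> (\<Prod>i<k. norm z0 + d + real i) * (real n + 1) powr (-1 - d)"
      by (simp add: norm_mult norm_power)
  qed
  ultimately show "\<exists>d>0. cball z0 d \<subseteq> {z. Re z > 1 - real k} \<and> uniform_limit (cball z0 d)
      (\<lambda>N z. \<Sum>n<N. (-1)^n * fdiff k (\<lambda>w. w powr (-z)) (of_real (real n + 1)))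
      (\<lambda>z. \<Sum>n. (-1)^n * fdiff k (\<lambda>w. w powr (-z)) (of_real (real n + 1))) sequentially"
    using \<open>d > 0\<close> by blast
qed (auto intro!: holomorphic_intros holomorphic_on_subset[OF holomorphic_fdiff_powr] open_halfspace_Re_gt)

definition eta_approx :: "nat \<Rightarrow> complex \<Rightarrow> complex" where
  "eta_approx k z = (\<Sum>j<k. fdiff j (\<lambda>w. w powr (-z)) 1 / 2 ^ Suc j) + eta_tail k z / 2 ^ k"

lemma eta_approx_Suc:
  assumes "Re z + real k > 0"
  shows "eta_approx (Suc k) z = eta_approx k z"
proof -
  let ?d = "fdiff k (\<lambda>w. w powr (-z)) 1"
  have "?d / 2 ^ Suc k + eta_tail (Suc k) z / 2 ^ Suc k = (eta_tail (Suc k) z + ?d) / (2 * 2 ^ k)"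
    by (simp add: add_divide_distrib)
  also have "\<dots> = eta_tail k z / 2 ^ k"
    by (simp add: eta_tail_Suc[OF assms])
  finally show ?thesis
    by (simp add: eta_approx_def add.assoc)
qed

lemma eta_approx_eq:
  assumes "Re z + real k > 0" and "k \<le> m"
  shows "eta_approx m z = eta_approx k z"
  using assms(2)
proof (induction m rule: dec_induct)
  case (step m)
  then show ?case using assms(1) by (simp add: eta_approx_Suc)
qed simp

lemma eta_approx_holomorphic: "eta_approx k holomorphic_on {z. Re z > 1 - real k}"
  unfolding eta_approx_def[abs_def]
  by (intro holomorphic_intros eta_tail_holomorphic holomorphic_on_subset[OF holomorphic_fdiff_powr]) auto

definition dirichlet_eta :: "complex \<Rightarrow> complex" where
  "dirichlet_eta z = eta_approx (nat \<lceil>- Re z\<rceil> + 1) z"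

lemma dirichlet_eta_eq_eta_approx:
  assumes "Re z + real k > 0"
  shows "dirichlet_eta z = eta_approx k z"
proof -
  define k0 where "k0 = nat \<lceil>- Re z\<rceil> + 1"
  have "Re z + real k0 > 0"
    unfolding k0_def by linarith
  then have "eta_approx k0 z = eta_approx (max k k0) z"
    by (intro eta_approx_eq[symmetric]) auto
  also have "\<dots> = eta_approx k z"
    using assms by (intro eta_approx_eq) auto
  finally show ?thesis
    unfolding dirichlet_eta_def k0_def .
qed

lemma dirichlet_eta_holomorphic: "dirichlet_eta holomorphic_on UNIV"
proof -
  have "dirichlet_eta holomorphic_on (\<Union>k. {z. Re z > 1 - real k})"
  proof (rule holomorphic_on_UN_open)
    fix k
    show "dirichlet_eta holomorphic_on {z. Re z > 1 - real k}"
    proof (rule holomorphic_transform[OF eta_approx_holomorphic])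
      fix z assume "z \<in> {z. Re z > 1 - real k}"
      then show "eta_approx k z = dirichlet_eta z"
        by (intro dirichlet_eta_eq_eta_approx[symmetric]) auto
    qed
  qed (rule open_halfspace_Re_gt)
  moreover have "(\<Union>k. {z. Re z > 1 - real k}) = UNIV"
  proof -
    have "Re z > 1 - real (nat \<lceil>- Re z\<rceil> + 2)" for z :: complex
      by linarith
    then show ?thesis by blast
  qed
  ultimately show ?thesis by simp
qed

lemma dirichlet_eta_sums:
  assumes "Re z > 0"
  shows "(\<lambda>n. (-1)^n / (of_real (real n + 1)) powr z) sums dirichlet_eta z"
proof -
  have "(\<lambda>n. (-1)^n * (of_real (real n + 1)) powr (-z)) sums ((eta_tail 1 z + 1) / 2)"
    using eta_tail_sums_halved[of z 0] assms by simp
  moreover have "(eta_tail 1 z + 1) / 2 = dirichlet_eta z"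
    using dirichlet_eta_eq_eta_approx[of z 1] assms by (simp add: eta_approx_def add_divide_distrib)
  ultimately show ?thesis
    by (simp add: powr_minus_divide)
qed

lemma zetaE_eq_dirichlet_eta: "zetaE = dirichlet_eta"
  unfolding zetaE_def zetaE_h_def
proof (rule the_equality)
  let ?P = "\<lambda>f. \<forall>z. Re z > 0 \<longrightarrow> (\<lambda>n. (-1)^n / (of_real (real n + 1)) powr z) sums f z"
  show "dirichlet_eta holomorphic_on UNIV \<and> ?P dirichlet_eta"
    using dirichlet_eta_holomorphic dirichlet_eta_sums by auto
  fix f assume f: "f holomorphic_on UNIV \<and> ?P f"
  show "f = dirichlet_eta"
  proof
    fix z
    show "f z = dirichlet_eta z"
    proof (rule analytic_continuation_open[of "{z. Re z > 0}" UNIV f dirichlet_eta])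
      show "{z. Re z > 0} \<noteq> {}"
        by (auto intro!: exI[of _ 1])
      show "f w = dirichlet_eta w" if "w \<in> {z. Re z > 0}" for w
        using that f dirichlet_eta_sums sums_unique2 by blast
    qed (use f dirichlet_eta_holomorphic open_halfspace_Re_gt in auto)
  qed
qed

lemma zetaE_eq_eta_tail: "Re z > -1 \<Longrightarrow> zetaE z = 1/2 + eta_tail 1 z / 2"
  using dirichlet_eta_eq_eta_approx[of z 1] by (simp add: zetaE_eq_dirichlet_eta eta_approx_def)

lemma zetaE_0: "zetaE 0 = 1/2"
proof -
  have "eta_tail 1 0 = 0"
    unfolding eta_tail_def by (simp add: powr_def complex_eq_iff)
  then show ?thesis
    using zetaE_eq_eta_tail[of 0] by simp
qed

lemma zetaE_1: "zetaE 1 = of_real (ln 2)"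
proof -
  have "(\<lambda>n. (-1)^n / of_real (real n + 1)) sums zetaE 1"
    using dirichlet_eta_sums[of 1] by (simp add: zetaE_eq_dirichlet_eta)
  moreover have "(\<lambda>n. (-1)^n / of_real (real n + 1)) sums (of_real (ln 2) :: complex)"
    using sums_of_real[OF alternating_harmonic_series_sums, where 'a = complex] by (simp add: add.commute)
  ultimately show ?thesis
    using sums_unique2 by blast
qed

lemma has_integral_partial_sums:
  fixes h :: "real \<Rightarrow> 'a::banach"
  assumes "\<And>n. (h has_integral c n) {real n + 1..real n + 2}"
  shows "(h has_integral (\<Sum>n<N. c n)) {1..real N + 1}"
proof (induction N)
  case 0
  show ?case
    using has_integral_refl(2)[of h 1] by simp
next
  case (Suc N)
  have "(h has_integral (\<Sum>n<N. c n) + c N) {1..real N + 2}"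
    by (rule has_integral_combine[OF _ _ Suc assms]) auto
  then show ?case by (simp add: add_ac)
qed

lemma norm_integral_minus_partial_sum_le:
  fixes h :: "real \<Rightarrow> 'a::banach"
  assumes pieces: "\<And>n. (h has_integral c n) {real n + 1..real n + 2}"
    and bound: "\<And>t. t \<ge> 1 \<Longrightarrow> norm (h t) \<le> g t"
    and g_antimono: "\<And>s t. 1 \<le> s \<Longrightarrow> s \<le> t \<Longrightarrow> g t \<le> g s"
    and T: "real N + 1 \<le> T" "T \<le> real N + 2" "T \<ge> 2"
  shows "norm (integral {1..T} h - (\<Sum>n<N. c n)) \<le> g (T - 1)"
proof -
  let ?a = "real N + 1"
  have "h integrable_on {1..real (Suc N) + 1}"
    using has_integral_partial_sums[OF pieces] by (rule has_integral_integrable)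
  then have int: "h integrable_on {1..T}" "h integrable_on {?a..T}"
    using T by (simp_all add: integrable_subinterval_real)
  have split: "integral {1..T} h - (\<Sum>n<N. c n) = integral {?a..T} h"
    using Henstock_Kurzweil_Integration.integral_combine[OF _ _ int(1), of ?a] T
      integral_unique[OF has_integral_partial_sums[OF pieces]] by (simp add: algebra_simps)
  have g_nonneg: "g ?a \<ge> 0"
    using order_trans[OF norm_ge_zero bound[of ?a]] by simp
  have "norm (h t) \<le> g ?a" if "t \<in> {?a..T} - {}" for t
    using that bound[of t] g_antimono[of ?a t] by auto
  from has_integral_bound_real[OF g_nonneg finite.emptyI integrable_integral[OF int(2)] this]
  have "norm (integral {?a..T} h) \<le> g ?a * (T - ?a)"
    using T by simp
  also have "\<dots> \<le> g ?a"
    using g_nonneg T by (intro mult_right_le_one_le) auto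
  also have "\<dots> \<le> g (T - 1)"
    using g_antimono[of "T - 1" ?a] T by simp
  finally show ?thesis
    unfolding split .
qed

lemma integral_tendsto_of_pieces:
  fixes h :: "real \<Rightarrow> 'a::banach"
  assumes pieces: "\<And>n. (h has_integral c n) {real n + 1..real n + 2}"
    and bound: "\<And>t. t \<ge> 1 \<Longrightarrow> norm (h t) \<le> g t"
    and g_antimono: "\<And>s t. 1 \<le> s \<Longrightarrow> s \<le> t \<Longrightarrow> g t \<le> g s"
    and g_tendsto: "(g \<longlongrightarrow> 0) at_top"
    and sums: "c sums I"
  shows "((\<lambda>T. integral {1..T} h) \<longlongrightarrow> I) at_top"
proof -
  define N :: "real \<Rightarrow> nat" where "N T = nat \<lfloor>T\<rfloor> - 1" for T
  have "filterlim N sequentially at_top"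
    unfolding filterlim_at_top
  proof
    fix Z :: nat
    show "\<forall>\<^sub>F T in at_top. Z \<le> N T"
      unfolding eventually_at_top_linorder N_def
      by (rule exI[of _ "real Z + 2"]) linarith
  qed
  with sums have partial_sums: "((\<lambda>T. \<Sum>n<N T. c n) \<longlongrightarrow> I) at_top"
    unfolding sums_def by (rule filterlim_compose)
  have "filterlim (\<lambda>T::real. T - 1) at_top at_top"
    using filterlim_tendsto_add_at_top[OF tendsto_const[of "-1 :: real"] filterlim_ident] by simp
  have "((\<lambda>T. integral {1..T} h - (\<Sum>n<N T. c n)) \<longlongrightarrow> 0) at_top"
  proof (rule Lim_null_comparison)
    show "\<forall>\<^sub>F T in at_top. norm (integral {1..T} h - (\<Sum>n<N T. c n)) \<le> g (T - 1)"
      using eventually_ge_at_top[of "2::real"]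
    proof eventually_elim
      case (elim T)
      then have "real (N T) + 1 \<le> T" "T \<le> real (N T) + 2"
        unfolding N_def by linarith+
      from norm_integral_minus_partial_sum_le[OF pieces bound g_antimono this elim]
      show ?case .
    qed
    show "((\<lambda>T. g (T - 1)) \<longlongrightarrow> 0) at_top"
      using g_tendsto \<open>filterlim (\<lambda>T::real. T - 1) at_top at_top\<close> by (rule filterlim_compose)
  qed
  from tendsto_add[OF this partial_sums] show ?thesis
    by simp
qed

lemma E0bar_uminus: "real n + 1 < t \<Longrightarrow> t \<le> real n + 2 \<Longrightarrow> E0bar (-t) = (-1)^n"
proof -
  assume "real n + 1 < t" "t \<le> real n + 2"
  then have "\<lfloor>-t\<rfloor> = - (int n + 2)"
    by (simp add: floor_eq_iff)
  then show ?thesis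
    unfolding E0bar_def by simp
qed

lemma has_integral_E0bar_uminus_piece:
  fixes d :: "real \<Rightarrow> complex"
  assumes "((\<lambda>t. 1 / d t) has_integral e) {real n + 1..real n + 2}"
  shows "((\<lambda>t. of_real (E0bar (-t)) / d t) has_integral (-1)^n * e) {real n + 1..real n + 2}"
proof (rule has_integral_spike_finite[OF finite.insertI[OF finite.emptyI]])
  show "((\<lambda>t. (-1)^n * (1 / d t)) has_integral (-1)^n * e) {real n + 1..real n + 2}"
    by (rule has_integral_mult_right[OF assms])
  fix t assume "t \<in> {real n + 1..real n + 2} - {real n + 1}"
  then have "real n + 1 < t" "t \<le> real n + 2"
    by auto
  then show "of_real (E0bar (-t)) / d t = (-1)^n * (1 / d t)"
    by (simp add: E0bar_uminus)
qed

lemma norm_E0bar_uminus_div_powr: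
  assumes "t \<ge> 1"
  shows "norm (of_real (E0bar (-t)) / of_real t powr (z + 1)) \<le> t powr (-Re z - 1)"
proof -
  have "norm (complex_of_real (E0bar (-t))) = 1"
    by (simp add: E0bar_def)
  moreover have "t powr (-Re z - 1) = 1 / t powr (Re z + 1)"
    using powr_minus_divide[of t "Re z + 1"] by simp
  ultimately show ?thesis
    using assms by (simp add: norm_divide norm_powr_real_powr)
qed

lemma has_integral_inverse_powr:
  fixes z :: complex
  assumes "a > 0" "z \<noteq> 0"
  shows "((\<lambda>t. 1 / of_real t powr (z + 1)) has_integral fdiff 1 (\<lambda>w. w powr (-z)) (of_real a) / z) {a..a + 1}"
proof (rule has_integral_eq)
  show "((\<lambda>t. of_real t powr (-z - 1)) has_integral fdiff 1 (\<lambda>w. w powr (-z)) (of_real a) / z) {a..a + 1}"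
  proof -
    have "((\<lambda>t. of_real t powr (-z - 1)) has_integral
        (- (of_real (a + 1) powr (-z)) / z) - (- (of_real a powr (-z)) / z)) {a..a + 1}"
    proof (rule fundamental_theorem_of_calculus)
      fix x assume "x \<in> {a..a + 1}"
      then have "complex_of_real x \<notin> \<real>\<^sub>\<le>\<^sub>0"
        using assms(1) by (auto simp: nonpos_Reals_def)
      then have "((\<lambda>w. - (w powr (-z)) / z) has_field_derivative of_real x powr (-z - 1)) (at (of_real x))"
        using assms(2) by (auto intro!: derivative_eq_intros)
      then show "((\<lambda>t. - (of_real t powr (-z)) / z) has_vector_derivative of_real x powr (-z - 1))
          (at x within {a..a + 1})"
        by (rule has_vector_derivative_real_field[THEN has_vector_derivative_at_within])
    qed (use assms in auto)
    moreover have "(- (of_real (a + 1) powr (-z)) / z) - (- (of_real a powr (-z)) / z)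
        = fdiff 1 (\<lambda>w. w powr (-z)) (of_real a) / z"
      by (simp add: diff_divide_distrib)
    ultimately show ?thesis
      by simp
  qed
  show "of_real t powr (-z - 1) = 1 / of_real t powr (z + 1)" for t
    using powr_minus_divide[of "complex_of_real t" "z + 1"] by (simp only: minus_add_distrib diff_conv_add_uminus)
qed

lemma has_integral_inverse:
  assumes "a > 0"
  shows "((\<lambda>t. 1 / complex_of_real t) has_integral of_real (ln (1 + inverse a))) {a..a + 1}"
proof (rule has_integral_eq)
  have "((\<lambda>t. complex_of_real (1 / t)) has_integral of_real (ln (a + 1)) - of_real (ln a)) {a..a + 1}"
  proof (rule fundamental_theorem_of_calculus)
    fix x assume "x \<in> {a..a + 1}"
    with assms show "((\<lambda>t. complex_of_real (ln t)) has_vector_derivative of_real (1 / x)) (at x within {a..a + 1})"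
      by (intro has_vector_derivative_of_real) (auto intro!: derivative_eq_intros)
  qed (use assms in auto)
  moreover have "ln (a + 1) - ln a = ln (1 + inverse a)"
  proof -
    have "1 + inverse a = (a + 1) / a"
      using assms by (simp add: field_simps)
    then show ?thesis
      using assms by (simp add: ln_div)
  qed
  ultimately show "((\<lambda>t. complex_of_real (1 / t)) has_integral of_real (ln (1 + inverse a))) {a..a + 1}"
    by (metis of_real_diff)
  show "complex_of_real (1 / t) = 1 / complex_of_real t" for t
    by simp
qed

lemma E0bar_integral_tendsto:
  assumes "Re z > -1" "z \<noteq> 0"
  shows "((\<lambda>T. integral {1..T} (\<lambda>t. of_real (E0bar (-t)) / of_real t powr (z + 1)))
    \<longlongrightarrow> eta_tail 1 z / z) at_top"
proof (rule integral_tendsto_of_pieces)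
  show "((\<lambda>t. of_real (E0bar (-t)) / of_real t powr (z + 1)) has_integral
      (-1)^n * (fdiff 1 (\<lambda>w. w powr (-z)) (of_real (real n + 1)) / z)) {real n + 1..real n + 2}" for n
    using has_integral_inverse_powr[of "real n + 1" z] assms
    by (intro has_integral_E0bar_uminus_piece) (simp add: add.assoc)
  show "(\<lambda>n. (-1)^n * (fdiff 1 (\<lambda>w. w powr (-z)) (of_real (real n + 1)) / z)) sums (eta_tail 1 z / z)"
    using sums_divide[OF eta_tail_sums[of z 1]] assms by (simp add: times_divide_eq_right)
  show "((\<lambda>t. t powr (-Re z - 1)) \<longlongrightarrow> 0) at_top"
    using assms by (intro tendsto_neg_powr filterlim_ident) auto
  show "t powr (-Re z - 1) \<le> s powr (-Re z - 1)" if "1 \<le> s" "s \<le> t" for s t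
    using that assms by (intro powr_mono2') auto
qed (rule norm_E0bar_uminus_div_powr)

lemma E0bar_inverse_integral_convergent:
  "\<exists>I. ((\<lambda>T. integral {1..T} (\<lambda>t. of_real (E0bar (-t)) / complex_of_real t)) \<longlongrightarrow> I) at_top"
proof -
  define a where "a n = ln (1 + inverse (real n + 1))" for n
  have "summable (\<lambda>n. (-1)^n * a n)"
  proof (rule summable_Leibniz')
    have "(\<lambda>n. 1 + inverse (real n + 1)) \<longlonglongrightarrow> 1"
      using LIMSEQ_inverse_real_of_nat_add[of 1] by (simp add: add.commute)
    from tendsto_ln[OF this] show "a \<longlonglongrightarrow> 0"
      unfolding a_def by simp
    show "a (Suc n) \<le> a n" for n
      unfolding a_def by (intro ln_mono add_left_mono le_imp_inverse_le) (auto intro: add_pos_nonneg)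
  qed (auto simp: a_def)
  then have sums: "(\<lambda>n. (-1)^n * complex_of_real (a n)) sums of_real (\<Sum>n. (-1)^n * a n)"
    using sums_of_real[OF summable_sums] by force
  have "((\<lambda>T. integral {1..T} (\<lambda>t. of_real (E0bar (-t)) / complex_of_real t))
      \<longlongrightarrow> of_real (\<Sum>n. (-1)^n * a n)) at_top"
  proof (rule integral_tendsto_of_pieces)
    show "((\<lambda>t. of_real (E0bar (-t)) / complex_of_real t) has_integral
        (-1)^n * complex_of_real (a n)) {real n + 1..real n + 2}" for n
      using has_integral_inverse[of "real n + 1"] unfolding a_def
      by (intro has_integral_E0bar_uminus_piece) (simp add: add.assoc)
    show "norm (of_real (E0bar (-t)) / complex_of_real t) \<le> t powr (-1)" if "t \<ge> 1" for t
      using norm_E0bar_uminus_div_powr[OF that, of 0] by simp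
    show "t powr (-1) \<le> s powr (-1)" if "1 \<le> s" "s \<le> t" for s t :: real
      using that by (intro powr_mono2') auto
    show "((\<lambda>t::real. t powr (-1)) \<longlongrightarrow> 0) at_top"
      by (intro tendsto_neg_powr filterlim_ident) auto
  qed (rule sums)
  then show ?thesis ..
qed

lemma tilde_gamma_0_1: "tilde_gamma 0 1 = of_real (ln 2)"
  using zetaE_1 by (simp add: tilde_gamma_def zetaE_def)

lemma sums_alternating_inverse_consecutive_products:
  "(\<lambda>j. (-1) ^ (Suc j + 1) / (real (Suc j) * real (Suc j + 1))) sums (2 * ln 2 - 1)"
proof -
  define f :: "nat \<Rightarrow> real" where "f n = (-1)^n / real (Suc n)" for n
  have f: "f sums ln 2"
    unfolding f_def by (rule alternating_harmonic_series_sums)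
  then have "(\<lambda>n. f (Suc n)) sums (ln 2 - f 0)"
    by (simp add: sums_Suc_iff)
  then have "(\<lambda>n. f (Suc n)) sums (ln 2 - 1)"
    by (simp add: f_def)
  from sums_add[OF this f] have "(\<lambda>n. f (Suc n) + f n) sums (2 * ln 2 - 1)"
    by simp
  moreover have "f (Suc n) + f n = (-1) ^ (Suc n + 1) / (real (Suc n) * real (Suc n + 1))" for n
    unfolding f_def by (simp add: field_simps)
  ultimately show ?thesis
    by simp
qed

lemma Digamma_2_minus_Digamma_3_2: "Digamma 2 - Digamma (3/2) = (of_real (2 * ln 2) - 1 :: complex)"
proof -
  have "Digamma (2 :: complex) = 1 - euler_mascheroni"
    using Digamma_numeral[of "num.Bit0 num.One", where 'a = complex] by (simp add: harm_expand)
  moreover have "Digamma (of_nat 1 + 1/2 :: complex) = 2 - euler_mascheroni - of_real (2 * ln 2)"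
    using Digamma_half_integer[of 1, where 'a = complex] by simp
  ultimately show ?thesis
    by simp
qed

theorem corollary3p3:
  shows "(\<forall>z::complex. Re z > -1 \<longrightarrow>
      (\<exists>I. ((\<lambda>T. integral {1..T}
                 (\<lambda>t. complex_of_real (E0bar (-t)) / (complex_of_real t) powr (z + 1)))
              \<longlongrightarrow> I) at_top
          \<and> zetaE z = 1/2 + 1/2 * z * I)) \<and>
    tilde_gamma 0 1 = 1/2 + 1/2 * (\<Sum>j. (-1) ^ (Suc j + 1) /
              (of_nat (Suc j) * of_nat (Suc j + 1))) \<and>
    tilde_gamma 0 1 = 1/2 * (Digamma 2 - Digamma (3/2) + 1)"
proof (intro conjI allI impI)
  fix z :: complex
  assume "Re z > -1"
  show "\<exists>I. ((\<lambda>T. integral {1..T}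
                 (\<lambda>t. complex_of_real (E0bar (-t)) / (complex_of_real t) powr (z + 1)))
              \<longlongrightarrow> I) at_top
          \<and> zetaE z = 1/2 + 1/2 * z * I"
  proof (cases "z = 0")
    case True
    then show ?thesis
      using E0bar_inverse_integral_convergent zetaE_0 by simp
  next
    case False
    with \<open>Re z > -1\<close> show ?thesis
      using E0bar_integral_tendsto zetaE_eq_eta_tail by (intro exI[of _ "eta_tail 1 z / z"]) auto
  qed
next
  have "(\<Sum>j. (-1) ^ (Suc j + 1) / (of_nat (Suc j) * of_nat (Suc j + 1)) :: complex) = of_real (2 * ln 2 - 1)"
    using sums_of_real[OF sums_alternating_inverse_consecutive_products, where 'a = complex]
    by (simp add: sums_iff)
  then show "tilde_gamma 0 1 = 1/2 + 1/2 * (\<Sum>j. (-1) ^ (Suc j + 1) /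
              (of_nat (Suc j) * of_nat (Suc j + 1)))"
    by (simp add: tilde_gamma_0_1 field_simps)
next
  show "tilde_gamma 0 1 = 1/2 * (Digamma 2 - Digamma (3/2) + 1)"
    by (simp add: tilde_gamma_0_1 Digamma_2_minus_Digamma_3_2)
qed

end
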